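(* Let $(X,U,f)$ be a robot grid search problem. Then for all $x_I,x_I'\in X$ there exists a finite action sequence $\tilde u$ such that applying $\tilde u$ from $x_I$ and from $x_I'$ ends in the same state.
   Context: A robot grid search problem: $X\subset\mathbb{Z}\times\mathbb{Z}$ finite and connected (any two points are joined by a chain in $X$ with consecutive points at distance $1$), $U=\{(-1,0),(1,0),(0,1),(0,-1)\}$, $f(x,u)=x+u$ if $x+u\in X$ and $f(x,u)=x$ otherwise. Applying $\tilde u=(u_1,\ldots,u_K)$ from $x$ yields $f(\cdots f(f(x,u_1),u_2)\cdots,u_K)$. *)

theory Defs
  imports Main
begin

type_synonym pt = "int \<times> int"

definition U :: "pt set" where
  "U = {(-1,0), (1,0), (0,1), (0,-1)}"

definition adj :: "pt \<Rightarrow> pt \<Rightarrow> bool" where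
  "adj p q \<longleftrightarrow> \<bar>fst p - fst q\<bar> + \<bar>snd p - snd q\<bar> = 1"

definition grid_connected :: "pt set \<Rightarrow> bool" where
  "grid_connected X \<longleftrightarrow> (\<forall>p\<in>X. \<forall>q\<in>X. \<exists>c. c \<noteq> [] \<and> hd c = p \<and> last c = q
      \<and> set c \<subseteq> X \<and> (\<forall>i. Suc i < length c \<longrightarrow> adj (c ! i) (c ! Suc i)))"

definition step :: "pt set \<Rightarrow> pt \<Rightarrow> pt \<Rightarrow> pt" where
  "step X x u = (let y = (fst x + fst u, snd x + snd u) in if y \<in> X then y else x)"

definition apply_seq :: "pt set \<Rightarrow> pt \<Rightarrow> pt list \<Rightarrow> pt" where
  "apply_seq X x us = foldl (step X) x us"

end

theory Submission
  imports Defs "HOL-Library.Product_Plus"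
begin

text \<open>The key claim: if a move sequence \<open>w\<close> is never blocked when applied from \<open>x\<close>, then
  \<open>x\<close> and \<open>x + \<Sum>w\<close> can be brought to a common state; connectivity supplies such a \<open>w\<close>
  between any two states. The claim is proved by induction on the length of \<open>w\<close>, with
  \<open>d = \<Sum>w \<noteq> 0\<close>. Applying \<open>w\<close> to \<open>x\<close> and \<open>x + d\<close> either translates both robots by \<open>d\<close>,
  which can happen only finitely often in a finite \<open>X\<close>, or blocks the second robot for the
  first time after a prefix \<open>a u\<close> of \<open>w = a u b\<close>. At that moment the first robot is at some
  \<open>x'\<close> and the second one at \<open>x' + \<Sum>(b a)\<close>, and \<open>b a\<close> is an unblocked walk from \<open>x'\<close>
  that is shorter than \<open>w\<close>.\<close>

lemma step_eq: "step X x u = (if x + u \<in> X then x + u else x)"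
  unfolding step_def plus_prod_def by (simp add: Let_def)

lemma apply_seq_Nil [simp]: "apply_seq X x [] = x"
  by (simp add: apply_seq_def)

lemma apply_seq_append: "apply_seq X x (as @ bs) = apply_seq X (apply_seq X x as) bs"
  by (simp add: apply_seq_def)

fun walk :: "pt set \<Rightarrow> pt \<Rightarrow> pt list \<Rightarrow> bool" where
  "walk X x [] \<longleftrightarrow> x \<in> X"
| "walk X x (u # us) \<longleftrightarrow> x \<in> X \<and> walk X (x + u) us"

lemma walk_start_in: "walk X x us \<Longrightarrow> x \<in> X"
  by (cases us) auto

lemma walk_append: "walk X x (as @ bs) \<longleftrightarrow> walk X x as \<and> walk X (x + sum_list as) bs"
  by (induction as arbitrary: x) (auto simp: add.assoc dest: walk_start_in)

lemma apply_seq_walk: "walk X x us \<Longrightarrow> apply_seq X x us = x + sum_list us"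
proof (induction us arbitrary: x)
  case (Cons u us)
  then have "step X x u = x + u"
    by (auto simp: step_eq dest: walk_start_in)
  with Cons show ?case
    by (simp add: apply_seq_def add.assoc)
qed simp

lemma first_blocked_move:
  assumes "\<not> walk X y us" and "y \<in> X"
  obtains a u b where "us = a @ u # b" and "walk X y a" and "y + sum_list a + u \<notin> X"
  using assms
proof (induction us arbitrary: y thesis)
  case (Cons u us)
  show ?case
  proof (cases "y + u \<in> X")
    case False
    then show ?thesis using Cons.prems by (intro Cons.prems(1)[of "[]"]) auto
  next
    case True
    with Cons.prems have "\<not> walk X (y + u) us" by simp
    from Cons.IH[OF _ this True] obtain a v b where
      "us = a @ v # b" "walk X (y + u) a" "y + u + sum_list a + v \<notin> X" by blast
    with Cons.prems True show ?thesis
      by (intro Cons.prems(1)[of "u # a" v b]) (auto simp: add.assoc)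
  qed
qed simp

lemma blocked_walk_rotation:
  assumes walk: "walk X x us" and blocked: "\<not> walk X (x + sum_list us) us"
  obtains a u b where "us = a @ u # b"
    and "walk X (apply_seq X x (a @ [u])) (b @ a)"
    and "apply_seq X x (a @ [u]) + sum_list (b @ a) = apply_seq X (x + sum_list us) (a @ [u])"
proof -
  define y where "y = x + sum_list us"
  have "y \<in> X"
    using walk walk_append[of X x us "[]"] by (simp add: y_def)
  with blocked obtain a u b where us: "us = a @ u # b" and walk_y: "walk X y a"
    and stuck: "y + sum_list a + u \<notin> X"
    by (auto simp: y_def[symmetric] elim: first_blocked_move)
  define x' where "x' = x + sum_list (a @ [u])"
  have walk_x: "walk X x (a @ [u])" and walk_x': "walk X x' b"
    using walk us walk_append[of X x "a @ [u]" b] by (auto simp: x'_def)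
  have y_eq: "y = x' + sum_list b"
    by (simp add: y_def x'_def us add.assoc)
  have "apply_seq X y (a @ [u]) = y + sum_list a"
    using apply_seq_walk[OF walk_y] stuck by (simp add: apply_seq_append apply_seq_def step_eq)
  moreover have "walk X x' (b @ a)"
    using walk_x' walk_y y_eq by (simp add: walk_append)
  ultimately show thesis
    using that[OF us] apply_seq_walk[OF walk_x] y_eq by (simp add: x'_def y_def add.assoc)
qed

lemma finite_escapes_progression:
  assumes "finite X" and "d \<noteq> (0 :: pt)" and z_Suc: "\<And>k. z (Suc k) = z k + d"
  obtains k where "z k \<notin> X"
proof -
  have z_eq: "z k = (fst (z 0) + int k * fst d, snd (z 0) + int k * snd d)" for k
    by (induction k) (simp_all add: z_Suc plus_prod_def algebra_simps)
  have "inj z"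
  proof (rule injI)
    fix k m
    assume "z k = z m"
    then have "int k * fst d = int m * fst d" "int k * snd d = int m * snd d"
      by (auto simp: z_eq[of k] z_eq[of m])
    with assms(2) show "k = m"
      by (metis mult_cancel_right of_nat_eq_iff prod_eqI fst_zero snd_zero)
  qed
  then have "\<not> range z \<subseteq> X"
    using assms(1) by (meson finite_subset finite_imageD infinite_UNIV_nat)
  with that show thesis by blast
qed

definition synchronizable :: "pt set \<Rightarrow> pt \<Rightarrow> pt \<Rightarrow> bool" where
  "synchronizable X x y \<longleftrightarrow> (\<exists>vs. set vs \<subseteq> U \<and> apply_seq X x vs = apply_seq X y vs)"

lemma synchronizable_refl: "synchronizable X x x"
  unfolding synchronizable_def by (intro exI[of _ "[]"]) simp

lemma synchronizable_after_prefix: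
  assumes "set us \<subseteq> U" and "synchronizable X (apply_seq X x us) (apply_seq X y us)"
  shows "synchronizable X x y"
  using assms unfolding synchronizable_def by (metis apply_seq_append set_append sup.boundedI)

lemma walk_ends_synchronizable:
  assumes "finite X"
  shows "set us \<subseteq> U \<Longrightarrow> walk X x us \<Longrightarrow> synchronizable X x (x + sum_list us)"
proof (induction "length us" arbitrary: us x rule: less_induct)
  case less
  define d where "d = sum_list us"
  have blocked_sync: "synchronizable X y (y + d)"
    if walk_y: "walk X y us" and blocked: "\<not> walk X (y + d) us" for y
  proof -
    obtain a u b where us: "us = a @ u # b"
      and walk_rot: "walk X (apply_seq X y (a @ [u])) (b @ a)"
      and ends: "apply_seq X y (a @ [u]) + sum_list (b @ a) = apply_seq X (y + d) (a @ [u])"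
      using blocked_walk_rotation[OF walk_y blocked[unfolded d_def]] unfolding d_def by blast
    have "length (b @ a) < length us" and "set (b @ a) \<subseteq> U"
      using us less.prems(1) by auto
    from less.hyps[OF this walk_rot]
    have "synchronizable X (apply_seq X y (a @ [u])) (apply_seq X (y + d) (a @ [u]))"
      by (simp only: ends)
    moreover have "set (a @ [u]) \<subseteq> U"
      using us less.prems(1) by auto
    ultimately show ?thesis
      by (rule synchronizable_after_prefix[rotated])
  qed
  have translate: "walk X (y + d) us \<and> \<not> synchronizable X (y + d) (y + d + d)"
    if walk_y: "walk X y us" and not_sync: "\<not> synchronizable X y (y + d)" for y
  proof
    show walk_yd: "walk X (y + d) us"
      using blocked_sync walk_y not_sync by blast
    have "apply_seq X y us = y + d" and "apply_seq X (y + d) us = y + d + d"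
      using apply_seq_walk[OF walk_y] apply_seq_walk[OF walk_yd] by (simp_all add: d_def)
    then show "\<not> synchronizable X (y + d) (y + d + d)"
      using synchronizable_after_prefix[OF less.prems(1), of X y "y + d"] not_sync by metis
  qed
  show ?case
  proof (rule ccontr)
    assume not_sync: "\<not> synchronizable X x (x + sum_list us)"
    then have "d \<noteq> 0"
      using synchronizable_refl[of X x] by (auto simp: d_def)
    define z where "z k = ((\<lambda>y. y + d) ^^ k) x" for k
    have z_Suc: "z (Suc k) = z k + d" for k
      by (simp add: z_def)
    have "walk X (z k) us \<and> \<not> synchronizable X (z k) (z (Suc k))" for k
    proof (induction k)
      case 0
      then show ?case using less.prems not_sync by (simp add: z_def d_def)
    next
      case (Suc k)
      then show ?case using translate by (simp add: z_Suc)
    qed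
    then have "z k \<in> X" for k
      using walk_start_in by blast
    with finite_escapes_progression[of X d z] assms \<open>d \<noteq> 0\<close> z_Suc show False
      by blast
  qed
qed

lemma adj_diff_in_U: "adj a b \<Longrightarrow> b - a \<in> U"
  unfolding adj_def U_def by (cases a, cases b) (auto simp: abs_if split: if_splits)

lemma adj_chain_walk:
  assumes "c \<noteq> []" and "set c \<subseteq> X" and "\<forall>i. Suc i < length c \<longrightarrow> adj (c ! i) (c ! Suc i)"
  shows "\<exists>us. set us \<subseteq> U \<and> walk X (hd c) us \<and> hd c + sum_list us = last c"
  using assms
proof (induction c)
  case (Cons a c)
  show ?case
  proof (cases c)
    case Nil
    with Cons.prems show ?thesis by (intro exI[of _ "[]"]) auto
  next
    case (Cons b c')
    with Cons.prems(3) have "adj a b" and "\<forall>i. Suc i < length c \<longrightarrow> adj (c ! i) (c ! Suc i)"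
      by (fastforce, metis Suc_less_eq length_Cons nth_Cons_Suc)
    with Cons.IH Cons.prems \<open>c = b # c'\<close> obtain us where
      "set us \<subseteq> U" "walk X b us" "b + sum_list us = last c"
      by auto
    with adj_diff_in_U[OF \<open>adj a b\<close>] Cons.prems \<open>c = b # c'\<close> show ?thesis
      by (intro exI[of _ "(b - a) # us"]) (auto simp: algebra_simps)
  qed
qed simp

theorem lemma2:
  fixes X :: "(int \<times> int) set"
  assumes "finite X" and "grid_connected X"
    and "xI \<in> X" and "xI' \<in> X"
  shows "\<exists>us. set us \<subseteq> U \<and> apply_seq X xI us = apply_seq X xI' us"
proof -
  obtain c where "c \<noteq> []" "hd c = xI" "last c = xI'" "set c \<subseteq> X"
    "\<forall>i. Suc i < length c \<longrightarrow> adj (c ! i) (c ! Suc i)"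
    using assms(2-4) unfolding grid_connected_def by blast
  then obtain us where "set us \<subseteq> U" "walk X xI us" "xI + sum_list us = xI'"
    using adj_chain_walk by blast
  then have "synchronizable X xI xI'"
    using walk_ends_synchronizable[OF assms(1)] by metis
  then show ?thesis
    unfolding synchronizable_def .
qed

end
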